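(* Let $\mathcal S \subseteq \mathsf P^n$ be the stabilizer group of an $n$-qubit stabilizer code and $\mathcal L = \mathcal S^\perp$ its group of logical operators. Let $\Gamma \subseteq 2^{\{1,\dots,n\}}$ be a set of supports, and consider Pauli channels of the form $P = \mathop{\ast}_{\gamma\in\Gamma} P_\gamma$ (convolution over $\gamma \in \Gamma$), where each $P_\gamma$ is a probability distribution on $\mathsf P^n$ with $P_\gamma(e)=0$ whenever $\operatorname{supp}(e)\not\subseteq\gamma$. Call such a $P$ correctable if (i) for all $\gamma_1,\gamma_2\in\Gamma$ the region $\gamma_1\cup\gamma_2$ is correctable, and (ii) $P(I)>\tfrac12$. Then for a correctable channel $P$ the logical channel $$P_L(e)=\frac{1}{|\mathcal S|}\sum_{s\in\mathcal S}P(es),\qquad e\in\mathsf P^n,$$ is uniquely determined by the stabilizer expectations (syndrome statistics) $E(s)=\sum_{e\in\mathsf P^n}\langle s,e\rangle P(e)$, $s\in\mathcal S$. That is, if $P$ and $P'$ are two correctable channels with the same set of supports $\Gamma$ and $\sum_e\langle s,e\rangle P(e)=\sum_e\langle s,e\rangle P'(e)$ for all $s\in\mathcal S$, then $P_L=P'_L$.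
   Context: $\mathsf P^n$ denotes the effective $n$-qubit Pauli group, i.e. the $n$-qubit Pauli group modulo phases $\{\pm1,\pm i\}$; it is Abelian. For $a,e\in\mathsf P^n$, $\langle a,e\rangle=+1$ if $a$ and $e$ commute in the Pauli group and $-1$ if they anticommute. For a subgroup $B$, $B^\perp=\{a\in\mathsf P^n:\langle a,b\rangle=+1\ \forall b\in B\}$. A stabilizer group is a subgroup $\mathcal S$ with $\mathcal S\subseteq\mathcal S^\perp$ (coming from a commuting subgroup of the Pauli group not containing $-I$). The support $\operatorname{supp}(e)$ is the set of qubits on which $e$ acts nontrivially. A region $R\subseteq\{1,\dots,n\}$ is correctable if every $l\in\mathcal L$ with $\operatorname{supp}(l)\subseteq R$ lies in $\mathcal S$. Convolution of functions on $\mathsf P^n$: $(f\ast g)(e)=\sum_{e'}f(e')g(ee')$. *)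

theory Defs
  imports Complex_Main
begin

text \<open>Single-qubit Paulis modulo phase (the Klein four group).\<close>
datatype pauli1 = PI | PX | PY | PZ

fun mult1 :: "pauli1 \<Rightarrow> pauli1 \<Rightarrow> pauli1" where
  "mult1 PI b = b"
| "mult1 a PI = a"
| "mult1 PX PX = PI" | "mult1 PY PY = PI" | "mult1 PZ PZ = PI"
| "mult1 PX PY = PZ" | "mult1 PY PX = PZ"
| "mult1 PX PZ = PY" | "mult1 PZ PX = PY"
| "mult1 PY PZ = PX" | "mult1 PZ PY = PX"

definition anticomm1 :: "pauli1 \<Rightarrow> pauli1 \<Rightarrow> bool" where
  "anticomm1 a b \<longleftrightarrow> a \<noteq> PI \<and> b \<noteq> PI \<and> a \<noteq> b"

type_synonym pauli = "nat \<Rightarrow> pauli1"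

definition pauli_group :: "nat \<Rightarrow> pauli set" where
  "pauli_group n = {e. \<forall>i. e i \<noteq> PI \<longrightarrow> i \<in> {1..n}}"

definition pid :: pauli where "pid = (\<lambda>i. PI)"

definition pmult :: "pauli \<Rightarrow> pauli \<Rightarrow> pauli" where
  "pmult e f = (\<lambda>i. mult1 (e i) (f i))"

definition supp :: "pauli \<Rightarrow> nat set" where
  "supp e = {i. e i \<noteq> PI}"

text \<open>Commutation character \<langle>a,e\<rangle> \<in> {+1,-1}.\<close>
definition symp :: "nat \<Rightarrow> pauli \<Rightarrow> pauli \<Rightarrow> real" where
  "symp n a e = (-1) ^ card {i \<in> {1..n}. anticomm1 (a i) (e i)}"

definition perp :: "nat \<Rightarrow> pauli set \<Rightarrow> pauli set" where
  "perp n B = {a \<in> pauli_group n. \<forall>b\<in>B. symp n a b = 1}"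

definition psubgroup :: "nat \<Rightarrow> pauli set \<Rightarrow> bool" where
  "psubgroup n B \<longleftrightarrow> B \<subseteq> pauli_group n \<and> pid \<in> B \<and> (\<forall>a\<in>B. \<forall>b\<in>B. pmult a b \<in> B)"

definition stabilizer_group :: "nat \<Rightarrow> pauli set \<Rightarrow> bool" where
  "stabilizer_group n S \<longleftrightarrow> psubgroup n S \<and> S \<subseteq> perp n S"

definition correctable_region :: "nat \<Rightarrow> pauli set \<Rightarrow> nat set \<Rightarrow> bool" where
  "correctable_region n S R \<longleftrightarrow> (\<forall>l \<in> perp n S. supp l \<subseteq> R \<longrightarrow> l \<in> S)"

text \<open>Convolution of functions on P^n (functions are taken to vanish outside P^n).\<close>
definition conv :: "nat \<Rightarrow> (pauli \<Rightarrow> real) \<Rightarrow> (pauli \<Rightarrow> real) \<Rightarrow> pauli \<Rightarrow> real" where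
  "conv n f g e = (if e \<in> pauli_group n then (\<Sum>e'\<in>pauli_group n. f e' * g (pmult e e')) else 0)"

definition delta_id :: "nat \<Rightarrow> pauli \<Rightarrow> real" where
  "delta_id n e = (if e = pid then 1 else 0)"

text \<open>Convolution over a finite index set \<Gamma> (convolution is commutative and associative).\<close>
definition conv_over :: "nat \<Rightarrow> nat set set \<Rightarrow> (nat set \<Rightarrow> pauli \<Rightarrow> real) \<Rightarrow> pauli \<Rightarrow> real" where
  "conv_over n \<Gamma> Pf = Finite_Set.fold (\<lambda>\<gamma> acc. conv n (Pf \<gamma>) acc) (delta_id n) \<Gamma>"

definition prob_dist :: "nat \<Rightarrow> (pauli \<Rightarrow> real) \<Rightarrow> bool" where
  "prob_dist n p \<longleftrightarrow> (\<forall>e. p e \<ge> 0) \<and> (\<forall>e. e \<notin> pauli_group n \<longrightarrow> p e = 0)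
     \<and> (\<Sum>e\<in>pauli_group n. p e) = 1"

definition local_family :: "nat \<Rightarrow> nat set set \<Rightarrow> (nat set \<Rightarrow> pauli \<Rightarrow> real) \<Rightarrow> bool" where
  "local_family n \<Gamma> Pf \<longleftrightarrow> (\<forall>\<gamma>\<in>\<Gamma>. prob_dist n (Pf \<gamma>) \<and> (\<forall>e. \<not> supp e \<subseteq> \<gamma> \<longrightarrow> Pf \<gamma> e = 0))"

definition correctable_channel ::
  "nat \<Rightarrow> pauli set \<Rightarrow> nat set set \<Rightarrow> (nat set \<Rightarrow> pauli \<Rightarrow> real) \<Rightarrow> bool" where
  "correctable_channel n S \<Gamma> Pf \<longleftrightarrow>
     (\<forall>\<gamma>1\<in>\<Gamma>. \<forall>\<gamma>2\<in>\<Gamma>. correctable_region n S (\<gamma>1 \<union> \<gamma>2))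
     \<and> conv_over n \<Gamma> Pf pid > 1/2"

definition logical_channel :: "pauli set \<Rightarrow> (pauli \<Rightarrow> real) \<Rightarrow> pauli \<Rightarrow> real" where
  "logical_channel S P e = (1 / real (card S)) * (\<Sum>s\<in>S. P (pmult e s))"

definition stab_expect :: "nat \<Rightarrow> (pauli \<Rightarrow> real) \<Rightarrow> pauli \<Rightarrow> real" where
  "stab_expect n P s = (\<Sum>e\<in>pauli_group n. symp n s e * P e)"

end

(* The stabilizer expectations E = stab_expect n P form the Fourier transform of P on the
   elementary abelian 2-group P^n, whose characters are the commutation signs symp n a.
   The transform turns the convolution of the local factors P_gamma into the product of their
   transforms E_gamma, and P(I) > 1/2 forces E > 0, so ln E is the sum over gamma of
   ln |E_gamma|, whose gamma-th term depends only on the restriction of its argument to gamma.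
   For two such channels, D = ln E - ln E' is therefore a sum of gamma-local functions, and the
   Fourier transform of D is supported on Paulis with support inside a single gamma.
   By Poisson summation, D = 0 on S means that this transform sums to zero over every coset of
   L = S^perp. Two points of its support in the same coset differ by a logical operator supported
   on some gamma1 union gamma2, hence by a stabilizer, so every l in L has constant sign on the
   support within each coset; thus D = 0 on L. Again by Poisson summation, the logical channel
   only depends on E restricted to L. *)

theory Submission
  imports Defs
begin

section \<open>The Pauli group modulo phases\<close>

lemma mult1_commute: "mult1 a b = mult1 b a"
  by (cases a; cases b; simp)

lemma mult1_assoc: "mult1 (mult1 a b) c = mult1 a (mult1 b c)"
  by (cases a; cases b; cases c; simp)

lemma mult1_self [simp]: "mult1 a a = PI"
  by (cases a; simp)

lemma mult1_PI_right [simp]: "mult1 a PI = a"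
  by (cases a; simp)

lemma pmult_commute: "pmult a b = pmult b a"
  unfolding pmult_def by (simp add: mult1_commute)

lemma pmult_assoc: "pmult (pmult a b) c = pmult a (pmult b c)"
  unfolding pmult_def by (simp add: mult1_assoc)

lemma pmult_self [simp]: "pmult a a = pid"
  unfolding pmult_def pid_def by simp

lemma pmult_pid_right [simp]: "pmult a pid = a"
  unfolding pmult_def pid_def by simp

lemma pmult_pid_left [simp]: "pmult pid a = a"
  unfolding pmult_def pid_def by simp

lemma pmult_cancel_left [simp]: "pmult a (pmult a b) = b"
  by (simp flip: pmult_assoc)

lemma pmult_cancel_right [simp]: "pmult (pmult b a) a = b"
  by (simp add: pmult_assoc)

lemma pmult_eq_pid_iff: "pmult a b = pid \<longleftrightarrow> a = b"
  by (metis pmult_cancel_left pmult_pid_right pmult_self)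

lemma supp_pmult: "supp (pmult a b) \<subseteq> supp a \<union> supp b"
  unfolding supp_def pmult_def by auto

lemma pid_in_pauli_group [simp]: "pid \<in> pauli_group n"
  unfolding pauli_group_def pid_def by simp

lemma pauli_group_not_empty [simp]: "pauli_group n \<noteq> {}"
  using pid_in_pauli_group by blast

lemma pmult_in_pauli_group [simp]:
  "a \<in> pauli_group n \<Longrightarrow> b \<in> pauli_group n \<Longrightarrow> pmult a b \<in> pauli_group n"
  unfolding pauli_group_def pmult_def by (auto, metis mult1.simps(1), metis mult1.simps(1))

lemma finite_pauli_group [simp]: "finite (pauli_group n)"
proof -
  have "(UNIV :: pauli1 set) = {PI, PX, PY, PZ}"
    using pauli1.exhaust by auto
  then have "finite (UNIV :: pauli1 set)"
    by (metis finite.emptyI finite_insert)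
  moreover have "pauli_group n = {f. \<forall>x. (x \<in> {1..n} \<longrightarrow> f x \<in> UNIV) \<and> (x \<notin> {1..n} \<longrightarrow> f x = PI)}"
    unfolding pauli_group_def by blast
  ultimately show ?thesis
    using finite_set_of_finite_funs[of "{1..n}" "UNIV :: pauli1 set" PI] by simp
qed

lemma card_pauli_group_pos: "card (pauli_group n) > 0"
  by (simp add: card_gt_0_iff)

lemma psubgroup_pauli_group: "psubgroup n (pauli_group n)"
  unfolding psubgroup_def by simp

lemma psubgroup_finite: "psubgroup n H \<Longrightarrow> finite H"
  unfolding psubgroup_def by (meson finite_pauli_group finite_subset)

lemma card_psubgroup_pos: "psubgroup n H \<Longrightarrow> card H > 0"
  using psubgroup_finite card_gt_0_iff unfolding psubgroup_def by blast

lemma sum_pmult_shift: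
  assumes "psubgroup n H" and "h \<in> H"
  shows "(\<Sum>a\<in>H. f (pmult a h)) = (\<Sum>a\<in>H. f a)"
proof -
  have "bij_betw (\<lambda>a. pmult a h) H H"
    by (rule bij_betw_byWitness[where f' = "\<lambda>a. pmult a h"])
      (use assms in \<open>auto simp: psubgroup_def\<close>)
  then show ?thesis
    by (rule sum.reindex_bij_betw)
qed

section \<open>The commutation sign\<close>

definition sign1 :: "pauli1 \<Rightarrow> pauli1 \<Rightarrow> real" where
  "sign1 x y = (if anticomm1 x y then -1 else 1)"

lemma sign1_mult1: "sign1 (mult1 a b) y = sign1 a y * sign1 b y"
  unfolding sign1_def anticomm1_def by (cases a; cases b; cases y; simp)

lemma sign1_commute: "sign1 a b = sign1 b a"
  unfolding sign1_def anticomm1_def by auto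

lemma sign1_PI [simp]: "sign1 x PI = 1" "sign1 PI x = 1"
  unfolding sign1_def anticomm1_def by auto

lemma symp_eq_prod_sign1: "symp n a e = (\<Prod>i\<in>{1..n}. sign1 (a i) (e i))"
proof -
  have "(\<Prod>i\<in>{1..n}. sign1 (a i) (e i)) =
      (\<Prod>i\<in>{1..n} \<inter> {i. anticomm1 (a i) (e i)}. -1) * (\<Prod>i\<in>{1..n} \<inter> - {i. anticomm1 (a i) (e i)}. 1)"
    unfolding sign1_def by (rule prod.If_cases) simp
  then show ?thesis
    unfolding symp_def by (simp add: Int_def conj_commute)
qed

lemma symp_pmult_left: "symp n (pmult a b) e = symp n a e * symp n b e"
  unfolding symp_eq_prod_sign1 pmult_def by (simp add: sign1_mult1 prod.distrib)

lemma symp_commute: "symp n a b = symp n b a"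
  unfolding symp_eq_prod_sign1 by (simp add: sign1_commute)

lemma symp_pmult_right: "symp n e (pmult a b) = symp n e a * symp n e b"
  by (metis symp_commute symp_pmult_left)

lemma symp_pid [simp]: "symp n pid e = 1" "symp n e pid = 1"
  unfolding symp_eq_prod_sign1 pid_def by simp_all

lemma symp_cases: "symp n a e = 1 \<or> symp n a e = -1"
  unfolding symp_def minus_one_power_iff by simp

lemma symp_eq_iff_symp_pmult: "symp n l a = symp n l b \<longleftrightarrow> symp n l (pmult a b) = 1"
  using symp_cases[of n l a] symp_cases[of n l b] by (auto simp: symp_pmult_right)

lemma perp_subset_pauli_group: "perp n H \<subseteq> pauli_group n"
  unfolding perp_def by auto

lemma psubgroup_perp: "psubgroup n (perp n H)"
  unfolding psubgroup_def perp_def by (auto simp: symp_pmult_left)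

lemma exists_anticommuting_on_qubit:
  assumes "i \<in> {1..n}" and "e i \<noteq> PI"
  obtains a where "a \<in> pauli_group n" "symp n a e = -1" "supp a \<subseteq> {i}"
proof
  define p where "p = (if e i = PX then PZ else PX)"
  show "pid(i := p) \<in> pauli_group n"
    using assms(1) unfolding pauli_group_def pid_def by simp
  show "supp (pid(i := p)) \<subseteq> {i}"
    unfolding supp_def pid_def by auto
  have "symp n (pid(i := p)) e = (\<Prod>j\<in>{1..n}. if j = i then sign1 p (e i) else 1)"
    unfolding symp_eq_prod_sign1 by (rule prod.cong) (simp_all add: pid_def)
  also have "\<dots> = sign1 p (e i)"
    using assms(1) by simp
  also have "\<dots> = -1"
    using assms(2) unfolding p_def sign1_def anticomm1_def by (cases "e i") simp_all
  finally show "symp n (pid(i := p)) e = -1" .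
qed

section \<open>Character sums and Poisson summation\<close>

lemma sum_symp_eq_0_if_anticommuting:
  assumes "psubgroup n H" and "h \<in> H" and "symp n h e = -1"
    and "\<forall>a\<in>H. f (pmult a h) = f a"
  shows "(\<Sum>a\<in>H. symp n a e * f a) = 0"
proof -
  have "(\<Sum>a\<in>H. symp n a e * f a) = (\<Sum>a\<in>H. symp n (pmult a h) e * f (pmult a h))"
    using sum_pmult_shift[OF assms(1,2), of "\<lambda>a. symp n a e * f a"] by simp
  also have "\<dots> = - (\<Sum>a\<in>H. symp n a e * f a)"
    using assms(3,4) by (simp add: symp_pmult_left flip: sum_negf)
  finally show ?thesis by simp
qed

lemma sum_symp_psubgroup:
  assumes "psubgroup n H" and "e \<in> pauli_group n"
  shows "(\<Sum>a\<in>H. symp n a e) = (if e \<in> perp n H then real (card H) else 0)"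
proof (cases "e \<in> perp n H")
  case True
  then have "\<forall>a\<in>H. symp n a e = 1"
    unfolding perp_def by (auto simp: symp_commute)
  with True show ?thesis
    by simp
next
  case False
  then obtain h where h: "h \<in> H" "symp n e h \<noteq> 1"
    using assms(2) unfolding perp_def by auto
  then have "symp n h e = -1"
    using symp_cases symp_commute by metis
  with h(1) False show ?thesis
    using sum_symp_eq_0_if_anticommuting[OF assms(1), of h e "\<lambda>_. 1"] by simp
qed

lemma perp_pauli_group: "perp n (pauli_group n) = {pid}"
proof -
  have "e = pid" if e: "e \<in> perp n (pauli_group n)" for e
  proof (rule ccontr)
    assume "e \<noteq> pid"
    then obtain i where i: "e i \<noteq> PI"
      unfolding pid_def by auto
    have "i \<in> {1..n}"
      using e i perp_subset_pauli_group unfolding pauli_group_def by blast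
    then obtain a where "a \<in> pauli_group n" "symp n a e = -1"
      using i by (rule exists_anticommuting_on_qubit)
    with e show False
      unfolding perp_def by (auto simp: symp_commute)
  qed
  then show ?thesis
    unfolding perp_def by auto
qed

lemma sum_symp_pauli_group:
  assumes "e \<in> pauli_group n"
  shows "(\<Sum>a\<in>pauli_group n. symp n a e) = (if e = pid then real (card (pauli_group n)) else 0)"
  using sum_symp_psubgroup[OF psubgroup_pauli_group assms] by (simp add: perp_pauli_group)

lemma stab_expect_stab_expect:
  assumes "x \<in> pauli_group n"
  shows "stab_expect n (stab_expect n f) x = real (card (pauli_group n)) * f x"
proof -
  let ?G = "pauli_group n"
  have "stab_expect n (stab_expect n f) x = (\<Sum>e\<in>?G. \<Sum>a\<in>?G. symp n e (pmult x a) * f a)"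
    unfolding stab_expect_def
    by (simp add: sum_distrib_left symp_pmult_right symp_commute[of n x] mult.assoc)
  also have "\<dots> = (\<Sum>a\<in>?G. (\<Sum>e\<in>?G. symp n e (pmult x a)) * f a)"
    by (subst sum.swap) (simp add: sum_distrib_right)
  also have "\<dots> = (\<Sum>a\<in>?G. if a = x then real (card ?G) * f a else 0)"
    by (rule sum.cong) (auto simp: assms sum_symp_pauli_group pmult_eq_pid_iff)
  also have "\<dots> = real (card ?G) * f x"
    using assms by simp
  finally show ?thesis .
qed

lemma poisson_summation:
  assumes "psubgroup n H" and "x \<in> pauli_group n"
  shows "(\<Sum>h\<in>H. symp n h x * stab_expect n g h) =
    real (card H) * (\<Sum>e\<in>{e \<in> pauli_group n. pmult x e \<in> perp n H}. g e)"
proof -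
  let ?G = "pauli_group n"
  have "(\<Sum>h\<in>H. symp n h x * stab_expect n g h) = (\<Sum>h\<in>H. \<Sum>e\<in>?G. g e * symp n h (pmult x e))"
    unfolding stab_expect_def by (simp add: sum_distrib_left symp_pmult_right mult_ac)
  also have "\<dots> = (\<Sum>e\<in>?G. g e * (\<Sum>h\<in>H. symp n h (pmult x e)))"
    by (subst sum.swap) (simp add: sum_distrib_left)
  also have "\<dots> = (\<Sum>e\<in>?G. real (card H) * (if pmult x e \<in> perp n H then g e else 0))"
    by (rule sum.cong) (simp_all add: assms sum_symp_psubgroup)
  finally show ?thesis
    by (simp add: sum.inter_filter sum_distrib_left)
qed

lemma logical_channel_eq_sum_logicals:
  assumes "psubgroup n S" and "e \<in> pauli_group n"
  shows "logical_channel S P e =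
    (\<Sum>a\<in>perp n S. symp n e a * stab_expect n P a) / real (card (pauli_group n))"
proof -
  let ?G = "pauli_group n"
  define g where "g a = symp n e a * stab_expect n P a" for a
  have "real (card ?G) * P (pmult e s) = stab_expect n g s" if "s \<in> S" for s
  proof -
    have "pmult e s \<in> ?G"
      using that assms unfolding psubgroup_def by auto
    then have "real (card ?G) * P (pmult e s) = stab_expect n (stab_expect n P) (pmult e s)"
      by (simp add: stab_expect_stab_expect)
    also have "\<dots> = stab_expect n g s"
      by (simp add: stab_expect_def[of n "stab_expect n P" "pmult e s"] stab_expect_def[of n g s] g_def
          symp_pmult_left symp_commute[of n _ e] symp_commute[of n _ s] mult_ac)
    finally show ?thesis .
  qed
  then have "real (card ?G) * (\<Sum>s\<in>S. P (pmult e s)) = (\<Sum>s\<in>S. symp n s pid * stab_expect n g s)"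
    by (simp add: sum_distrib_left)
  also have "\<dots> = real (card S) * (\<Sum>a\<in>perp n S. g a)"
    using poisson_summation[OF assms(1) pid_in_pauli_group] perp_subset_pauli_group
    by (simp add: Int_absorb1 Collect_conj_eq Int_commute)
  finally have "(\<Sum>s\<in>S. P (pmult e s)) = real (card S) * (\<Sum>a\<in>perp n S. g a) / real (card ?G)"
    by (intro eq_divide_imp) (auto simp: mult.commute)
  then show ?thesis
    using card_psubgroup_pos[OF assms(1)] unfolding logical_channel_def g_def by simp
qed

section \<open>Convolution of Pauli channels\<close>

lemma conv_left_commute: "conv n f (conv n g h) = conv n g (conv n f h)"
proof
  fix e
  let ?G = "pauli_group n"
  have reorder: "pmult (pmult e x) y = pmult (pmult e y) x" for x y
    by (metis pmult_assoc pmult_commute)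
  show "conv n f (conv n g h) e = conv n g (conv n f h) e"
  proof (cases "e \<in> ?G")
    case True
    have "conv n f (conv n g h) e = (\<Sum>x\<in>?G. \<Sum>y\<in>?G. f x * (g y * h (pmult (pmult e x) y)))"
      unfolding conv_def using True by (simp add: sum_distrib_left)
    also have "\<dots> = (\<Sum>y\<in>?G. \<Sum>x\<in>?G. g y * (f x * h (pmult (pmult e y) x)))"
      by (subst sum.swap) (simp add: reorder mult.left_commute)
    also have "\<dots> = conv n g (conv n f h) e"
      unfolding conv_def using True by (simp add: sum_distrib_left)
    finally show ?thesis .
  qed (simp add: conv_def)
qed

lemma conv_over_empty [simp]: "conv_over n {} Pf = delta_id n"
  unfolding conv_over_def by simp

lemma conv_over_insert:
  assumes "finite \<Gamma>" and "\<gamma> \<notin> \<Gamma>"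
  shows "conv_over n (insert \<gamma> \<Gamma>) Pf = conv n (Pf \<gamma>) (conv_over n \<Gamma> Pf)"
proof -
  interpret comp_fun_commute_on UNIV "\<lambda>\<gamma>. conv n (Pf \<gamma>)"
    by unfold_locales (simp add: fun_eq_iff conv_left_commute)
  show ?thesis
    unfolding conv_over_def using assms by simp
qed

lemma conv_over_nonneg:
  assumes "finite \<Gamma>" and "\<forall>\<gamma>\<in>\<Gamma>. \<forall>e. 0 \<le> Pf \<gamma> e"
  shows "0 \<le> conv_over n \<Gamma> Pf e"
  using assms
proof (induction \<Gamma> arbitrary: e rule: finite_induct)
  case empty
  then show ?case by (simp add: delta_id_def)
next
  case (insert \<gamma> \<Gamma>)
  then show ?case
    by (auto simp: conv_over_insert conv_def intro!: sum_nonneg)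
qed

lemma stab_expect_pid: "stab_expect n P pid = (\<Sum>e\<in>pauli_group n. P e)"
  unfolding stab_expect_def by simp

lemma stab_expect_delta_id [simp]: "stab_expect n (delta_id n) a = 1"
  unfolding stab_expect_def delta_id_def by (simp add: if_distrib cong: if_cong)

lemma stab_expect_conv:
  assumes "a \<in> pauli_group n"
  shows "stab_expect n (conv n f g) a = stab_expect n f a * stab_expect n g a"
proof -
  let ?G = "pauli_group n"
  have shift: "(\<Sum>e\<in>?G. symp n a e * g (pmult e x)) = symp n a x * stab_expect n g a"
    if "x \<in> ?G" for x
    using sum_pmult_shift[OF psubgroup_pauli_group that, of "\<lambda>e. symp n a (pmult e x) * g e"]
    by (simp add: stab_expect_def symp_pmult_right sum_distrib_left mult_ac)
  have "stab_expect n (conv n f g) a = (\<Sum>e\<in>?G. \<Sum>x\<in>?G. f x * (symp n a e * g (pmult e x)))"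
    unfolding stab_expect_def conv_def by (intro sum.cong) (auto simp: sum_distrib_left mult_ac)
  also have "\<dots> = (\<Sum>x\<in>?G. f x * (\<Sum>e\<in>?G. symp n a e * g (pmult e x)))"
    by (subst sum.swap) (simp add: sum_distrib_left)
  also have "\<dots> = (\<Sum>x\<in>?G. f x * (symp n a x * stab_expect n g a))"
    by (rule sum.cong) (simp_all add: shift)
  finally show ?thesis
    by (simp add: stab_expect_def[of n f] sum_distrib_left sum_distrib_right mult_ac)
qed

lemma stab_expect_conv_over:
  assumes "finite \<Gamma>" and "a \<in> pauli_group n"
  shows "stab_expect n (conv_over n \<Gamma> Pf) a = (\<Prod>\<gamma>\<in>\<Gamma>. stab_expect n (Pf \<gamma>) a)"
  using assms(1)
  by (induction \<Gamma> rule: finite_induct) (simp_all add: conv_over_insert stab_expect_conv assms(2))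

lemma stab_expect_lower_bound:
  assumes "\<forall>e. 0 \<le> P e" and "(\<Sum>e\<in>pauli_group n. P e) = 1"
  shows "stab_expect n P a \<ge> 2 * P pid - 1"
proof -
  let ?G = "pauli_group n"
  have "(\<Sum>e\<in>?G. (if e = pid then 2 * P e else 0) - P e) \<le> (\<Sum>e\<in>?G. symp n a e * P e)"
  proof (rule sum_mono)
    fix e
    show "(if e = pid then 2 * P e else 0) - P e \<le> symp n a e * P e"
      using assms(1)[rule_format, of e] symp_cases[of n a e] by auto
  qed
  then show ?thesis
    unfolding stab_expect_def using assms(2) by (simp add: sum_subtractf)
qed

lemma stab_expect_conv_over_pos:
  assumes "finite \<Gamma>" and "local_family n \<Gamma> Pf" and "conv_over n \<Gamma> Pf pid > 1/2"
  shows "stab_expect n (conv_over n \<Gamma> Pf) a > 0"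
proof -
  have "\<forall>e. 0 \<le> conv_over n \<Gamma> Pf e"
    using assms(1,2) conv_over_nonneg unfolding local_family_def prob_dist_def by blast
  moreover have "\<forall>\<gamma>\<in>\<Gamma>. stab_expect n (Pf \<gamma>) pid = 1"
    using assms(2) unfolding local_family_def prob_dist_def by (simp add: stab_expect_pid)
  then have "(\<Sum>e\<in>pauli_group n. conv_over n \<Gamma> Pf e) = 1"
    using stab_expect_conv_over[OF assms(1) pid_in_pauli_group, where Pf = Pf] by (simp add: stab_expect_pid)
  ultimately have "stab_expect n (conv_over n \<Gamma> Pf) a \<ge> 2 * conv_over n \<Gamma> Pf pid - 1"
    by (rule stab_expect_lower_bound)
  then show ?thesis
    using assms(3) by linarith
qed

lemma ln_stab_expect_conv_over:
  assumes "finite \<Gamma>" and "local_family n \<Gamma> Pf" and "conv_over n \<Gamma> Pf pid > 1/2"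
    and "a \<in> pauli_group n"
  shows "ln (stab_expect n (conv_over n \<Gamma> Pf) a) = (\<Sum>\<gamma>\<in>\<Gamma>. ln \<bar>stab_expect n (Pf \<gamma>) a\<bar>)"
proof -
  have prod: "stab_expect n (conv_over n \<Gamma> Pf) a = (\<Prod>\<gamma>\<in>\<Gamma>. stab_expect n (Pf \<gamma>) a)"
    using assms(1,4) by (rule stab_expect_conv_over)
  moreover have pos: "stab_expect n (conv_over n \<Gamma> Pf) a > 0"
    using assms(1-3) by (rule stab_expect_conv_over_pos)
  ultimately have "\<forall>\<gamma>\<in>\<Gamma>. stab_expect n (Pf \<gamma>) a \<noteq> 0"
    using assms(1) by (metis less_irrefl prod_zero_iff)
  moreover have "stab_expect n (conv_over n \<Gamma> Pf) a = (\<Prod>\<gamma>\<in>\<Gamma>. \<bar>stab_expect n (Pf \<gamma>) a\<bar>)"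
    using prod pos by (metis abs_of_pos abs_prod)
  ultimately show ?thesis
    using ln_prod[OF assms(1), of "\<lambda>\<gamma>. \<bar>stab_expect n (Pf \<gamma>) a\<bar>"] by simp
qed

section \<open>Local functions and their Fourier support\<close>

definition local_on :: "nat set \<Rightarrow> (pauli \<Rightarrow> 'a) \<Rightarrow> bool" where
  "local_on \<gamma> h \<longleftrightarrow> (\<forall>a b. (\<forall>i\<in>\<gamma>. a i = b i) \<longrightarrow> h a = h b)"

lemma local_on_compose: "local_on \<gamma> f \<Longrightarrow> local_on \<gamma> g \<Longrightarrow> local_on \<gamma> (\<lambda>a. F (f a) (g a))"
  unfolding local_on_def by metis

lemma local_on_stab_expect:
  assumes "\<forall>e. \<not> supp e \<subseteq> \<gamma> \<longrightarrow> f e = 0"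
  shows "local_on \<gamma> (stab_expect n f)"
  unfolding local_on_def
proof (intro allI impI)
  fix a b :: pauli
  assume ab: "\<forall>i\<in>\<gamma>. a i = b i"
  have "sign1 (a i) (e i) = sign1 (b i) (e i)" if "supp e \<subseteq> \<gamma>" for i e
  proof (cases "i \<in> \<gamma>")
    case False
    then have "e i = PI"
      using that unfolding supp_def by blast
    then show ?thesis by simp
  qed (use ab in simp)
  then have "symp n a e = symp n b e" if "supp e \<subseteq> \<gamma>" for e
    unfolding symp_eq_prod_sign1 using that by (intro prod.cong) simp_all
  then have "symp n a e * f e = symp n b e * f e" for e
    using assms by (cases "supp e \<subseteq> \<gamma>") simp_all
  then show "stab_expect n f a = stab_expect n f b"
    unfolding stab_expect_def by (intro sum.cong refl)
qed

lemma stab_expect_local_eq_0: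
  assumes "local_on \<gamma> h" and "e \<in> pauli_group n" and "\<not> supp e \<subseteq> \<gamma>"
  shows "stab_expect n h e = 0"
proof -
  obtain i where i: "e i \<noteq> PI" "i \<notin> \<gamma>"
    using assms(3) unfolding supp_def by blast
  then have "i \<in> {1..n}"
    using assms(2) unfolding pauli_group_def by blast
  then obtain a where a: "a \<in> pauli_group n" "symp n a e = -1" "supp a \<subseteq> {i}"
    using i(1) by (rule exists_anticommuting_on_qubit)
  have "a j = PI" if "j \<in> \<gamma>" for j
    using a(3) i(2) that unfolding supp_def by blast
  then have "\<forall>j\<in>\<gamma>. pmult b a j = b j" for b
    unfolding pmult_def by simp
  then have "h (pmult b a) = h b" for b
    using assms(1) unfolding local_on_def by blast
  then show ?thesis
    using sum_symp_eq_0_if_anticommuting[OF psubgroup_pauli_group a(1,2), of h]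
    by (simp add: stab_expect_def symp_commute[of n e])
qed

lemma stab_expect_sum_local_support:
  assumes "\<forall>a\<in>pauli_group n. D a = (\<Sum>\<gamma>\<in>\<Gamma>. h \<gamma> a)" and "\<forall>\<gamma>\<in>\<Gamma>. local_on \<gamma> (h \<gamma>)"
    and "e \<in> pauli_group n" and "stab_expect n D e \<noteq> 0"
  shows "\<exists>\<gamma>\<in>\<Gamma>. supp e \<subseteq> \<gamma>"
proof (rule ccontr)
  assume not_local: "\<not> (\<exists>\<gamma>\<in>\<Gamma>. supp e \<subseteq> \<gamma>)"
  have "stab_expect n D e = (\<Sum>a\<in>pauli_group n. \<Sum>\<gamma>\<in>\<Gamma>. symp n e a * h \<gamma> a)"
    unfolding stab_expect_def using assms(1) by (intro sum.cong) (simp_all add: sum_distrib_left)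
  also have "\<dots> = (\<Sum>\<gamma>\<in>\<Gamma>. stab_expect n (h \<gamma>) e)"
    unfolding stab_expect_def by (rule sum.swap)
  also have "\<dots> = 0"
  proof (rule sum.neutral, rule ballI)
    fix \<gamma> assume "\<gamma> \<in> \<Gamma>"
    with assms(2,3) not_local show "stab_expect n (h \<gamma>) e = 0"
      by (intro stab_expect_local_eq_0) auto
  qed
  finally show False
    using assms(4) by simp
qed

section \<open>Logical expectations are determined by stabilizer expectations\<close>

lemma sum_coset_stab_expect_eq_0:
  assumes "psubgroup n S" and "\<forall>s\<in>S. D s = 0" and "x \<in> pauli_group n"
  shows "(\<Sum>e\<in>{e \<in> pauli_group n. pmult x e \<in> perp n S}. stab_expect n D e) = 0"
proof -
  have "stab_expect n (stab_expect n D) s = 0" if "s \<in> S" for s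
  proof -
    have "s \<in> pauli_group n"
      using assms(1) that unfolding psubgroup_def by blast
    then show ?thesis
      using assms(2) that by (simp add: stab_expect_stab_expect)
  qed
  then show ?thesis
    using poisson_summation[OF assms(1,3), of "stab_expect n D"] card_psubgroup_pos[OF assms(1)]
    by simp
qed

lemma sum_over_cosets:
  fixes f :: "pauli \<Rightarrow> 'a::comm_semiring_1"
  assumes "psubgroup n H"
  shows "(\<Sum>x\<in>pauli_group n. \<Sum>e\<in>{e \<in> pauli_group n. pmult x e \<in> H}. f e) =
    of_nat (card H) * (\<Sum>e\<in>pauli_group n. f e)"
proof -
  let ?G = "pauli_group n"
  have card: "card {x \<in> ?G. pmult x e \<in> H} = card H" if "e \<in> ?G" for e
  proof -
    have "bij_betw (\<lambda>x. pmult x e) {x \<in> ?G. pmult x e \<in> H} H"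
      by (rule bij_betw_byWitness[where f' = "\<lambda>h. pmult h e"])
        (use assms that in \<open>auto simp: psubgroup_def\<close>)
    then show ?thesis
      by (rule bij_betw_same_card)
  qed
  have "(\<Sum>x\<in>?G. \<Sum>e\<in>{e \<in> ?G. pmult x e \<in> H}. f e) = (\<Sum>e\<in>?G. \<Sum>x\<in>{x \<in> ?G. pmult x e \<in> H}. f e)"
    by (rule sum.swap_restrict) simp_all
  also have "\<dots> = (\<Sum>e\<in>?G. of_nat (card H) * f e)"
    by (rule sum.cong) (simp_all add: card)
  finally show ?thesis
    by (simp add: sum_distrib_left)
qed

lemma sum_symp_eq_0_if_coset_sums_vanish:
  assumes "psubgroup n S" and l: "l \<in> perp n S"
    and cosets: "\<forall>x\<in>pauli_group n. (\<Sum>e\<in>{e \<in> pauli_group n. pmult x e \<in> perp n S}. F e) = 0"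
    and stab: "\<forall>e\<in>pauli_group n. \<forall>e'\<in>pauli_group n.
      F e \<noteq> 0 \<longrightarrow> F e' \<noteq> 0 \<longrightarrow> pmult e e' \<in> perp n S \<longrightarrow> pmult e e' \<in> S"
  shows "(\<Sum>e\<in>pauli_group n. symp n l e * F e) = 0"
proof -
  let ?G = "pauli_group n"
  let ?L = "perp n S"
  let ?C = "\<lambda>x. {e \<in> ?G. pmult x e \<in> ?L}"
  have "(\<Sum>e\<in>?C x. symp n l e * F e) = 0" if x: "x \<in> ?G" for x
  proof (cases "\<exists>e0\<in>?C x. F e0 \<noteq> 0")
    case True
    then obtain e0 where e0: "e0 \<in> ?C x" "F e0 \<noteq> 0"
      by blast
    have "symp n l e * F e = symp n l e0 * F e" if e: "e \<in> ?C x" for e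
    proof (cases "F e = 0")
      case False
      have "pmult e e0 = pmult (pmult x e) (pmult x e0)"
        by (metis pmult_assoc pmult_cancel_left pmult_commute)
      then have "pmult e e0 \<in> ?L"
        using e e0(1) psubgroup_perp[of n S] unfolding psubgroup_def by auto
      then have "pmult e e0 \<in> S"
        using stab e e0 False by blast
      then have "symp n l e = symp n l e0"
        using l unfolding perp_def by (simp add: symp_eq_iff_symp_pmult)
      then show ?thesis by simp
    qed simp
    then have "(\<Sum>e\<in>?C x. symp n l e * F e) = (\<Sum>e\<in>?C x. symp n l e0 * F e)"
      by (rule sum.cong[OF refl])
    also have "\<dots> = symp n l e0 * (\<Sum>e\<in>?C x. F e)"
      by (simp add: sum_distrib_left)
    finally show ?thesis
      using cosets x by simp
  qed auto
  then have "real (card ?L) * (\<Sum>e\<in>?G. symp n l e * F e) = 0"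
    using sum_over_cosets[OF psubgroup_perp[of n S], where f = "\<lambda>e. symp n l e * F e"] by simp
  then show ?thesis
    using card_psubgroup_pos[OF psubgroup_perp[of n S]] by simp
qed

lemma local_sum_vanishes_on_perp:
  fixes D :: "pauli \<Rightarrow> real"
  assumes "psubgroup n S"
    and corr: "\<forall>\<gamma>1\<in>\<Gamma>. \<forall>\<gamma>2\<in>\<Gamma>. correctable_region n S (\<gamma>1 \<union> \<gamma>2)"
    and D: "\<forall>a\<in>pauli_group n. D a = (\<Sum>\<gamma>\<in>\<Gamma>. h \<gamma> a)" and loc: "\<forall>\<gamma>\<in>\<Gamma>. local_on \<gamma> (h \<gamma>)"
    and "\<forall>s\<in>S. D s = 0" and "l \<in> perp n S"
  shows "D l = 0"
proof -
  let ?G = "pauli_group n"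
  have "l \<in> ?G"
    using assms(6) perp_subset_pauli_group by blast
  then have "real (card ?G) * D l = stab_expect n (stab_expect n D) l"
    by (simp add: stab_expect_stab_expect)
  also have "\<dots> = (\<Sum>e\<in>?G. symp n l e * stab_expect n D e)"
    by (simp only: stab_expect_def[of n "stab_expect n D"])
  also have "\<dots> = 0"
  proof (rule sum_symp_eq_0_if_coset_sums_vanish[OF assms(1,6)])
    show "\<forall>x\<in>?G. (\<Sum>e\<in>{e \<in> ?G. pmult x e \<in> perp n S}. stab_expect n D e) = 0"
      using sum_coset_stab_expect_eq_0[OF assms(1,5)] by blast
    show "\<forall>e\<in>?G. \<forall>e'\<in>?G. stab_expect n D e \<noteq> 0 \<longrightarrow> stab_expect n D e' \<noteq> 0 \<longrightarrow>
        pmult e e' \<in> perp n S \<longrightarrow> pmult e e' \<in> S"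
    proof (intro ballI impI)
      fix e e'
      assume "e \<in> ?G" "e' \<in> ?G" "stab_expect n D e \<noteq> 0" "stab_expect n D e' \<noteq> 0"
        and logical: "pmult e e' \<in> perp n S"
      then obtain \<gamma>1 \<gamma>2 where "\<gamma>1 \<in> \<Gamma>" "supp e \<subseteq> \<gamma>1" "\<gamma>2 \<in> \<Gamma>" "supp e' \<subseteq> \<gamma>2"
        using stab_expect_sum_local_support[OF D loc] by meson
      moreover have "supp (pmult e e') \<subseteq> supp e \<union> supp e'"
        by (rule supp_pmult)
      ultimately show "pmult e e' \<in> S"
        using corr logical unfolding correctable_region_def by blast
    qed
  qed
  finally show ?thesis
    using card_pauli_group_pos[of n] by simp
qed

lemma stab_expect_conv_over_eq_on_perp:
  assumes S: "psubgroup n S" and fin: "finite \<Gamma>"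
    and "local_family n \<Gamma> Pf" and "local_family n \<Gamma> Pf'"
    and "correctable_channel n S \<Gamma> Pf" and "correctable_channel n S \<Gamma> Pf'"
    and "\<forall>s\<in>S. stab_expect n (conv_over n \<Gamma> Pf) s = stab_expect n (conv_over n \<Gamma> Pf') s"
    and "l \<in> perp n S"
  shows "stab_expect n (conv_over n \<Gamma> Pf) l = stab_expect n (conv_over n \<Gamma> Pf') l"
proof -
  let ?E = "stab_expect n (conv_over n \<Gamma> Pf)" and ?E' = "stab_expect n (conv_over n \<Gamma> Pf')"
  have half: "conv_over n \<Gamma> Pf pid > 1/2" "conv_over n \<Gamma> Pf' pid > 1/2"
    and corr: "\<forall>\<gamma>1\<in>\<Gamma>. \<forall>\<gamma>2\<in>\<Gamma>. correctable_region n S (\<gamma>1 \<union> \<gamma>2)"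
    using assms(5,6) unfolding correctable_channel_def by simp_all
  define h where "h \<gamma> = (\<lambda>a. ln (\<bar>stab_expect n (Pf \<gamma>) a\<bar>) - ln (\<bar>stab_expect n (Pf' \<gamma>) a\<bar>))" for \<gamma>
  have ln_diff: "\<forall>a\<in>pauli_group n. ln (?E a) - ln (?E' a) = (\<Sum>\<gamma>\<in>\<Gamma>. h \<gamma> a)"
    unfolding h_def sum_subtractf
    using ln_stab_expect_conv_over[OF fin assms(3) half(1)] ln_stab_expect_conv_over[OF fin assms(4) half(2)]
    by simp
  have local: "\<forall>\<gamma>\<in>\<Gamma>. local_on \<gamma> (h \<gamma>)"
  proof
    fix \<gamma> assume "\<gamma> \<in> \<Gamma>"
    then have "\<forall>e. \<not> supp e \<subseteq> \<gamma> \<longrightarrow> Pf \<gamma> e = 0" "\<forall>e. \<not> supp e \<subseteq> \<gamma> \<longrightarrow> Pf' \<gamma> e = 0"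
      using assms(3,4) unfolding local_family_def by simp_all
    then show "local_on \<gamma> (h \<gamma>)"
      unfolding h_def
      by (intro local_on_compose[where F = "\<lambda>x y. ln (\<bar>x\<bar>) - ln (\<bar>y\<bar>)"] local_on_stab_expect)
  qed
  have "ln (?E l) - ln (?E' l) = 0"
    using local_sum_vanishes_on_perp[OF S corr ln_diff local _ assms(8)] assms(7) by simp
  then show ?thesis
    using stab_expect_conv_over_pos[OF fin assms(3) half(1), of l]
      stab_expect_conv_over_pos[OF fin assms(4) half(2), of l]
    by simp
qed

theorem theorem1:
  fixes n :: nat and S :: "pauli set" and \<Gamma> :: "nat set set"
    and Pf Pf' :: "nat set \<Rightarrow> pauli \<Rightarrow> real"
  assumes "stabilizer_group n S"
    and "\<Gamma> \<subseteq> Pow {1..n}"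
    and "local_family n \<Gamma> Pf" and "local_family n \<Gamma> Pf'"
    and "correctable_channel n S \<Gamma> Pf" and "correctable_channel n S \<Gamma> Pf'"
    and "\<forall>s\<in>S. stab_expect n (conv_over n \<Gamma> Pf) s = stab_expect n (conv_over n \<Gamma> Pf') s"
  shows "\<forall>e\<in>pauli_group n.
           logical_channel S (conv_over n \<Gamma> Pf) e = logical_channel S (conv_over n \<Gamma> Pf') e"
proof
  fix e
  assume e: "e \<in> pauli_group n"
  have S: "psubgroup n S"
    using assms(1) unfolding stabilizer_group_def by blast
  have "finite \<Gamma>"
    using assms(2) by (rule finite_subset) simp
  then have "\<forall>l\<in>perp n S. stab_expect n (conv_over n \<Gamma> Pf) l = stab_expect n (conv_over n \<Gamma> Pf') l"
    using stab_expect_conv_over_eq_on_perp[OF S _ assms(3-7)] by blast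
  then show "logical_channel S (conv_over n \<Gamma> Pf) e = logical_channel S (conv_over n \<Gamma> Pf') e"
    unfolding logical_channel_eq_sum_logicals[OF S e] by (simp cong: sum.cong)
qed

end
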